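(* Let $K,L,F,Z,S$ be positive integers with $L\le K$, and suppose a $(K,L,F,Z,S)$ extended placement delivery array (EPDA) exists. Then for every positive integer $N$ there exists a $(K,L,M,N)$ multi-antenna coded caching scheme with $\frac{M}{N}=\frac{Z}{F}$ and subpacketization number $F$, in which the server can meet any demand vector $\mathbf{d}=(d_1,\dots,d_K)\in[N]^K$ with delivery time $T=\frac{S}{F}$.
   Context: Notation: $[n]=\{1,\dots,n\}$. EPDA: Let $K,L\ (\le K),F,Z,S$ be positive integers. An $F\times K$ array $\mathbf{A}=[a_{j,k}]$, $j\in[F]$, $k\in[K]$, whose entries are either a special symbol $\star$ or integers in $[S]$, is a $(K,L,F,Z,S)$ EPDA if: (C1) $\star$ appears exactly $Z$ times in each column; (C2) every integer in $[S]$ occurs at least once in $\mathbf{A}$; (C3) no integer appears more than once in any column; (C4) for each $s\in[S]$, let $\mathbf{A}^{(s)}$ be the subarray obtained by deleting all rows and all columns of $\mathbf{A}$ that do not contain $s$; then no row of $\mathbf{A}^{(s)}$ contains more than $L$ integer entries (of any value). $(K,L,M,N)$ multi-antenna coded caching system: a server holds $N$ files $W_1,\dots,W_N$, each of size one unit, and has $L$ transmit antennas; it serves $K$ single-antenna users over a MISO broadcast channel of capacity one file per unit time. User $k$ has a cache of size $M$ units ($0\le M\le N$). In the placement phase (before demands are known) the server fills caches with uncoded file content; $\mathcal{Z}_k$ denotes the content of cache $k$. In the delivery phase each user $k$ requests file $W_{d_k}$; the server sends vectors $\mathbf{x}(\tau)\in\mathbb{C}^L$, and user $k$ receives $y_k(\tau)=\mathbf{h}_k^T\mathbf{x}(\tau)+w_k(\tau)$,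 where $\mathbf{h}_k\in\mathbb{C}^L$ is user $k$'s channel vector; all nodes know all channel vectors perfectly, and the high-SNR regime is considered, i.e. the noise $w_k$ is neglected. A scheme is correct if each user $k$ can recover $W_{d_k}$ from $\mathcal{Z}_k$ and its received signals, for every demand vector. The subpacketization number is the number of equal-size subfiles into which each file is split; if each file is split into $F$ subfiles and the delivery consists of $S'$ transmissions each carrying (precoded combinations of) subfiles of size $1/F$, the delivery time is $T=S'/F$. The channel vectors are taken to be in general position (generic), so that for any set of at most $L-1$ users and a further user there is a vector in $\mathbb{C}^L$ orthogonal to the channels of the former but not of the latter. *)

theory Defs
  imports Complex_Main
begin

text \<open>An F x K array: rows j in {1..F}, columns k in {1..K};
  None represents the star symbol, Some s the integer s.\<close>

definition EPDA ::
  "nat \<Rightarrow> nat \<Rightarrow> nat \<Rightarrow> nat \<Rightarrow> nat \<Rightarrow> (nat \<Rightarrow> nat \<Rightarrow> nat option) \<Rightarrow> bool" where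
  "EPDA K L F Z S A \<longleftrightarrow>
     0 < K \<and> 0 < L \<and> L \<le> K \<and> 0 < F \<and> 0 < Z \<and> 0 < S \<and>
     \<comment> \<open>entries are star or integers in [S]\<close>
     (\<forall>j\<in>{1..F}. \<forall>k\<in>{1..K}. \<forall>s. A j k = Some s \<longrightarrow> s \<in> {1..S}) \<and>
     \<comment> \<open>C1\<close>
     (\<forall>k\<in>{1..K}. card {j\<in>{1..F}. A j k = None} = Z) \<and>
     \<comment> \<open>C2\<close>
     (\<forall>s\<in>{1..S}. \<exists>j\<in>{1..F}. \<exists>k\<in>{1..K}. A j k = Some s) \<and>
     \<comment> \<open>C3\<close>
     (\<forall>k\<in>{1..K}. \<forall>j1\<in>{1..F}. \<forall>j2\<in>{1..F}. \<forall>s.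
        A j1 k = Some s \<and> A j2 k = Some s \<longrightarrow> j1 = j2) \<and>
     \<comment> \<open>C4: in the subarray A^(s) (rows and columns containing s), every row
        has at most L integer entries\<close>
     (\<forall>s\<in>{1..S}. \<forall>j\<in>{1..F}. (\<exists>k\<in>{1..K}. A j k = Some s) \<longrightarrow>
        card {k\<in>{1..K}. (\<exists>j'\<in>{1..F}. A j' k = Some s) \<and> A j k \<noteq> None} \<le> L)"

text \<open>Vectors in C^L are functions nat => complex, components indexed by {1..L}.
  User k receives h_k^T x = sum_i h_k(i) x(i).\<close>

definition chan :: "nat \<Rightarrow> (nat \<Rightarrow> complex) \<Rightarrow> (nat \<Rightarrow> complex) \<Rightarrow> complex" where
  "chan L h x = (\<Sum>i=1..L. h i * x i)"

definition generic_channels :: "nat \<Rightarrow> nat \<Rightarrow> (nat \<Rightarrow> nat \<Rightarrow> complex) \<Rightarrow> bool" where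
  "generic_channels K L h \<longleftrightarrow>
     (\<forall>U k. U \<subseteq> {1..K} \<and> card U \<le> L - 1 \<and> k \<in> {1..K} \<and> k \<notin> U \<longrightarrow>
        (\<exists>v. (\<forall>u\<in>U. chan L (h u) v = 0) \<and> chan L (h k) v \<noteq> 0))"

text \<open>Uncoded placement with subpacketization F: file W_n (n in [N]) is split into
  F equal subfiles W_{n,j} (j in [F]); cache k stores the subfiles indexed by
  Zc k. The cache of size M units (a subfile has size 1/F) holds at most M*F subfiles.\<close>

definition placement_ok ::
  "nat \<Rightarrow> real \<Rightarrow> nat \<Rightarrow> nat \<Rightarrow> (nat \<Rightarrow> (nat \<times> nat) set) \<Rightarrow> bool" where
  "placement_ok K M N F Zc \<longleftrightarrow>
     0 \<le> M \<and> M \<le> real N \<and>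
     (\<forall>k\<in>{1..K}. Zc k \<subseteq> {1..N} \<times> {1..F} \<and> real (card (Zc k)) \<le> M * real F)"

text \<open>Linear delivery with Sd transmissions, each carrying precoded linear combinations
  of subfiles (each subfile one complex symbol, of size 1/F): in transmission tau
  (tau in [Sd]) antenna i sends x_tau(i) = sum_{n,j} c tau n j i * W n j.\<close>

definition transmit ::
  "nat \<Rightarrow> nat \<Rightarrow> (nat \<Rightarrow> nat \<Rightarrow> nat \<Rightarrow> nat \<Rightarrow> complex) \<Rightarrow> (nat \<Rightarrow> nat \<Rightarrow> complex)
     \<Rightarrow> nat \<Rightarrow> nat \<Rightarrow> complex" where
  "transmit N F c W tau i = (\<Sum>n=1..N. \<Sum>j=1..F. c tau n j i * W n j)"

text \<open>Correct delivery for demand d: every user k in [K] can recover file W_{d_k}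
  from its cache and received signals, i.e. any two libraries which agree on the
  cache of k and produce the same received signals at k agree on all subfiles of
  W_{d_k} (existence of a decoding function).\<close>

definition delivery_correct ::
  "nat \<Rightarrow> nat \<Rightarrow> nat \<Rightarrow> nat \<Rightarrow> nat \<Rightarrow> (nat \<Rightarrow> (nat \<times> nat) set) \<Rightarrow> (nat \<Rightarrow> nat \<Rightarrow> complex)
     \<Rightarrow> (nat \<Rightarrow> nat) \<Rightarrow> (nat \<Rightarrow> nat \<Rightarrow> nat \<Rightarrow> nat \<Rightarrow> complex) \<Rightarrow> bool" where
  "delivery_correct K L N F Sd Zc h d c \<longleftrightarrow>
     (\<forall>k\<in>{1..K}. \<forall>W W' :: nat \<Rightarrow> nat \<Rightarrow> complex.
        (\<forall>(n, j)\<in>Zc k. W n j = W' n j) \<and>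
        (\<forall>tau\<in>{1..Sd}. chan L (h k) (transmit N F c W tau) = chan L (h k) (transmit N F c W' tau))
        \<longrightarrow> (\<forall>j\<in>{1..F}. W (d k) j = W' (d k) j))"

definition mac_scheme ::
  "nat \<Rightarrow> nat \<Rightarrow> real \<Rightarrow> nat \<Rightarrow> nat \<Rightarrow> real \<Rightarrow> (nat \<Rightarrow> (nat \<times> nat) set) \<Rightarrow> bool" where
  "mac_scheme K L M N F T Zc \<longleftrightarrow>
     placement_ok K M N F Zc \<and>
     (\<exists>Sd::nat. T = real Sd / real F \<and>
       (\<forall>h. generic_channels K L h \<longrightarrow>
          (\<forall>d. (\<forall>k\<in>{1..K}. d k \<in> {1..N}) \<longrightarrow>
             (\<exists>c. delivery_correct K L N F Sd Zc h d c))))"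

end

theory Submission
  imports Defs
begin

text \<open>Cache k stores every subfile W n j with a star in entry (j, k), so condition C1 gives
  M/N = Z/F. Transmission s sends, for every entry A j k' = s, the subfile W (d k') j along
  a zero-forcing vector that vanishes at all other users served in transmission s that do
  not cache subfile j; by C4 there are at most L - 1 of them, so generic channels admit such
  a vector. User k with A j k = s then receives W (d k) j free of interference, up to
  subfiles it has cached, and S transmissions of size 1/F serve all demands.\<close>

lemma sum_eq_0_remaining_term:
  fixes f :: "'a \<Rightarrow> 'b::comm_monoid_add"
  assumes "finite X" "x \<in> X" "sum f X = 0" "\<And>y. y \<in> X - {x} \<Longrightarrow> f y = 0"
  shows "f x = 0"
proof -
  have "sum f X = f x + sum f (X - {x})"
    by (rule sum.remove[OF assms(1,2)])
  with assms(3,4) show ?thesis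
    by simp
qed

lemma chan_sum: "chan L h (\<lambda>i. \<Sum>k\<in>B. f k i) = (\<Sum>k\<in>B. chan L h (f k))"
  unfolding chan_def by (simp add: sum_distrib_left) (rule sum.swap)

lemma chan_scale: "chan L h (\<lambda>i. f i * a) = chan L h f * a"
  unfolding chan_def by (simp add: sum_distrib_right mult.assoc)

lemma chan_transmit:
  "chan L h (transmit N F c W tau) =
     (\<Sum>(n, j)\<in>{1..N} \<times> {1..F}. chan L h (c tau n j) * W n j)"
proof -
  have "chan L h (transmit N F c W tau) =
      chan L h (\<lambda>i. \<Sum>(n, j)\<in>{1..N} \<times> {1..F}. c tau n j i * W n j)"
    unfolding transmit_def by (simp add: sum.cartesian_product)
  also have "\<dots> = (\<Sum>(n, j)\<in>{1..N} \<times> {1..F}. chan L h (\<lambda>i. c tau n j i * W n j))"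
    unfolding case_prod_beta by (rule chan_sum)
  finally show ?thesis
    by (simp only: chan_scale)
qed

locale epda =
  fixes K L F Z S :: nat and A :: "nat \<Rightarrow> nat \<Rightarrow> nat option"
  assumes EPDA: "EPDA K L F Z S A"
begin

lemma dims_pos: "0 < K" "0 < F"
  using EPDA unfolding EPDA_def by blast+

lemma entry_range: "j \<in> {1..F} \<Longrightarrow> k \<in> {1..K} \<Longrightarrow> A j k = Some s \<Longrightarrow> s \<in> {1..S}"
  using EPDA unfolding EPDA_def by blast

lemma card_stars: "k \<in> {1..K} \<Longrightarrow> card {j\<in>{1..F}. A j k = None} = Z"
  using EPDA unfolding EPDA_def by blast

lemma column_entries_distinct:
  "k \<in> {1..K} \<Longrightarrow> j1 \<in> {1..F} \<Longrightarrow> j2 \<in> {1..F} \<Longrightarrow>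
    A j1 k = Some s \<Longrightarrow> A j2 k = Some s \<Longrightarrow> j1 = j2"
  using EPDA unfolding EPDA_def by blast

lemma subarray_row_bound:
  "s \<in> {1..S} \<Longrightarrow> j \<in> {1..F} \<Longrightarrow> \<exists>k\<in>{1..K}. A j k = Some s \<Longrightarrow>
    card {k\<in>{1..K}. (\<exists>j'\<in>{1..F}. A j' k = Some s) \<and> A j k \<noteq> None} \<le> L"
  using EPDA unfolding EPDA_def by blast

lemma stars_le_rows: "Z \<le> F"
proof -
  have "1 \<in> {1..K}"
    using dims_pos(1) by simp
  then have "Z = card {j\<in>{1..F}. A j 1 = None}"
    by (rule card_stars[symmetric])
  also have "\<dots> \<le> card {1..F}"
    by (rule card_mono) auto
  finally show ?thesis
    by simp
qed

definition cache :: "nat \<Rightarrow> nat \<Rightarrow> (nat \<times> nat) set" where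
  "cache N k = {1..N} \<times> {j\<in>{1..F}. A j k = None}"

lemma placement_ok_cache:
  "placement_ok K (real N * real Z / real F) N F (cache N)"
  unfolding placement_ok_def
proof (intro conjI ballI)
  have "real N * real Z \<le> real N * real F"
    using stars_le_rows by (intro mult_left_mono) simp_all
  with dims_pos(2) show "real N * real Z / real F \<le> real N"
    by (simp add: pos_divide_le_eq)
  fix k assume k: "k \<in> {1..K}"
  show "cache N k \<subseteq> {1..N} \<times> {1..F}"
    unfolding cache_def by auto
  have "card (cache N k) = N * Z"
    unfolding cache_def card_cartesian_product using card_stars[OF k] by simp
  with dims_pos(2) show "real (card (cache N k)) \<le> real N * real Z / real F * real F"
    by simp
qed simp

text \<open>The users, other than k, served in transmission s that do not cache subfile j:
  the part of W (d k) j sent to k must be nulled at each of them.\<close>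

definition interferers :: "nat \<Rightarrow> nat \<Rightarrow> nat \<Rightarrow> nat set" where
  "interferers s j k =
     {u\<in>{1..K}. u \<noteq> k \<and> (\<exists>j'\<in>{1..F}. A j' u = Some s) \<and> A j u \<noteq> None}"

lemma card_interferers:
  assumes j: "j \<in> {1..F}" and k: "k \<in> {1..K}" and s: "A j k = Some s"
  shows "card (interferers s j k) \<le> L - 1"
proof -
  define B where "B = {u\<in>{1..K}. (\<exists>j'\<in>{1..F}. A j' u = Some s) \<and> A j u \<noteq> None}"
  have "card B \<le> L"
    unfolding B_def using subarray_row_bound[OF entry_range[OF j k s] j] k s by blast
  moreover have "k \<in> B" "interferers s j k = B - {k}"
    unfolding B_def interferers_def using j k s by auto
  ultimately show ?thesis
    by (simp add: B_def)
qed

definition zf_precoder :: "(nat \<Rightarrow> nat \<Rightarrow> complex) \<Rightarrow> nat \<Rightarrow> nat \<Rightarrow> nat \<Rightarrow> nat \<Rightarrow> complex" where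
  "zf_precoder h s j k =
     (SOME v. (\<forall>u\<in>interferers s j k. chan L (h u) v = 0) \<and> chan L (h k) v \<noteq> 0)"

lemma zf_precoder_spec:
  assumes "generic_channels K L h" "j \<in> {1..F}" "k \<in> {1..K}" "A j k = Some s"
  shows "\<forall>u\<in>interferers s j k. chan L (h u) (zf_precoder h s j k) = 0"
    and "chan L (h k) (zf_precoder h s j k) \<noteq> 0"
proof -
  have "interferers s j k \<subseteq> {1..K}" "k \<notin> interferers s j k"
    unfolding interferers_def by auto
  then have "\<exists>v. (\<forall>u\<in>interferers s j k. chan L (h u) v = 0) \<and> chan L (h k) v \<noteq> 0"
    using assms card_interferers unfolding generic_channels_def by blast
  then have "(\<forall>u\<in>interferers s j k. chan L (h u) (zf_precoder h s j k) = 0) \<and>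
      chan L (h k) (zf_precoder h s j k) \<noteq> 0"
    unfolding zf_precoder_def by (rule someI_ex)
  then show "\<forall>u\<in>interferers s j k. chan L (h u) (zf_precoder h s j k) = 0"
    and "chan L (h k) (zf_precoder h s j k) \<noteq> 0"
    by blast+
qed

definition precoding ::
  "(nat \<Rightarrow> nat \<Rightarrow> complex) \<Rightarrow> (nat \<Rightarrow> nat) \<Rightarrow> nat \<Rightarrow> nat \<Rightarrow> nat \<Rightarrow> nat \<Rightarrow> complex" where
  "precoding h d s n j =
     (\<lambda>i. \<Sum>k'\<in>{k'\<in>{1..K}. A j k' = Some s \<and> d k' = n}. zf_precoder h s j k' i)"

lemma chan_precoding:
  "chan L (h k) (precoding h d s n j) =
     (\<Sum>k'\<in>{k'\<in>{1..K}. A j k' = Some s \<and> d k' = n}. chan L (h k) (zf_precoder h s j k'))"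
  unfolding precoding_def by (rule chan_sum)

lemma zf_precoder_nulls_other_user:
  assumes G: "generic_channels K L h" and j: "j \<in> {1..F}"
    and k': "k' \<in> {1..K}" "A j k' = Some s"
    and k: "k \<in> {1..K}" "k \<noteq> k'" "A j k \<noteq> None"
    and j0: "j0 \<in> {1..F}" "A j0 k = Some s"
  shows "chan L (h k) (zf_precoder h s j k') = 0"
proof -
  have "k \<in> interferers s j k'"
    unfolding interferers_def using k j0 by blast
  then show ?thesis
    using zf_precoder_spec(1)[OF G j k'] by blast
qed

lemma precoding_gain_desired:
  assumes G: "generic_channels K L h" and j0: "j0 \<in> {1..F}" and k: "k \<in> {1..K}"
    and s: "A j0 k = Some s"
  shows "chan L (h k) (precoding h d s (d k) j0) \<noteq> 0"
proof -
  define U where "U = {k'\<in>{1..K}. A j0 k' = Some s \<and> d k' = d k}"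
  have "finite U" "k \<in> U"
    unfolding U_def using k s by simp_all
  have others: "chan L (h k) (zf_precoder h s j0 k') = 0" if "k' \<in> U - {k}" for k'
    using that zf_precoder_nulls_other_user[OF G j0 _ _ k(1) _ _ j0 s] s unfolding U_def by auto
  have "chan L (h k) (precoding h d s (d k) j0) = (\<Sum>k'\<in>U. chan L (h k) (zf_precoder h s j0 k'))"
    unfolding chan_precoding U_def ..
  also have "\<dots> = chan L (h k) (zf_precoder h s j0 k) +
      (\<Sum>k'\<in>U - {k}. chan L (h k) (zf_precoder h s j0 k'))"
    by (rule sum.remove[OF \<open>finite U\<close> \<open>k \<in> U\<close>])
  also have "\<dots> = chan L (h k) (zf_precoder h s j0 k)"
    using others by simp
  finally show ?thesis
    using zf_precoder_spec(2)[OF G j0 k s] by simp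
qed

lemma precoding_gain_interference:
  assumes G: "generic_channels K L h" and j0: "j0 \<in> {1..F}" and k: "k \<in> {1..K}"
    and s: "A j0 k = Some s" and j: "j \<in> {1..F}" and uncached: "A j k \<noteq> None"
    and other: "(n, j) \<noteq> (d k, j0)"
  shows "chan L (h k) (precoding h d s n j) = 0"
  unfolding chan_precoding
proof (rule sum.neutral, rule ballI)
  fix k' assume k': "k' \<in> {k'\<in>{1..K}. A j k' = Some s \<and> d k' = n}"
  have "k \<noteq> k'"
    using k' column_entries_distinct[OF k j j0 _ s] other by auto
  then show "chan L (h k) (zf_precoder h s j k') = 0"
    using zf_precoder_nulls_other_user[OF G j _ _ k _ uncached j0 s] k' by auto
qed

lemma delivery_correct_precoding:
  assumes G: "generic_channels K L h" and d: "\<forall>k\<in>{1..K}. d k \<in> {1..N}"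
  shows "delivery_correct K L N F S (cache N) h d (precoding h d)"
  unfolding delivery_correct_def
proof (intro ballI allI impI)
  fix k W W' j0
  assume k: "k \<in> {1..K}" and j0: "j0 \<in> {1..F}"
    and agree: "(\<forall>(n, j)\<in>cache N k. W n j = W' n j) \<and>
      (\<forall>tau\<in>{1..S}. chan L (h k) (transmit N F (precoding h d) W tau) =
                    chan L (h k) (transmit N F (precoding h d) W' tau))"
  show "W (d k) j0 = W' (d k) j0"
  proof (cases "A j0 k")
    case None
    then show ?thesis
      using agree d k j0 unfolding cache_def by auto
  next
    case (Some s)
    define X where "X = {1..N} \<times> {1..F}"
    define g where "g x = chan L (h k) (precoding h d s (fst x) (snd x))" for x
    define D where "D x = W (fst x) (snd x) - W' (fst x) (snd x)" for x
    have x0: "(d k, j0) \<in> X"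
      unfolding X_def using d k j0 by simp
    have "chan L (h k) (transmit N F (precoding h d) W s) =
        chan L (h k) (transmit N F (precoding h d) W' s)"
      using agree entry_range[OF j0 k Some] by blast
    then have "(\<Sum>x\<in>X. g x * W (fst x) (snd x)) = (\<Sum>x\<in>X. g x * W' (fst x) (snd x))"
      unfolding chan_transmit case_prod_beta X_def g_def .
    then have total: "(\<Sum>x\<in>X. g x * D x) = 0"
      unfolding D_def right_diff_distrib sum_subtractf by simp
    have others: "g x * D x = 0" if x: "x \<in> X - {(d k, j0)}" for x
    proof (cases "A (snd x) k")
      case None
      then have "x \<in> cache N k"
        using x unfolding X_def cache_def by auto
      then show ?thesis
        using agree unfolding D_def by auto
    next
      case (Some _)
      then have "g x = 0"
        using x precoding_gain_interference[OF G j0 k \<open>A j0 k = Some s\<close>,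
            where d = d and n = "fst x" and j = "snd x"]
        unfolding X_def g_def by auto
      then show ?thesis
        by simp
    qed
    have "finite X"
      unfolding X_def by simp
    then have "g (d k, j0) * D (d k, j0) = 0"
      using x0 total others by (rule sum_eq_0_remaining_term)
    moreover have "g (d k, j0) \<noteq> 0"
      unfolding g_def using precoding_gain_desired[OF G j0 k Some] by simp
    ultimately show ?thesis
      unfolding D_def by simp
  qed
qed

lemma mac_scheme_cache:
  "mac_scheme K L (real N * real Z / real F) N F (real S / real F) (cache N)"
  unfolding mac_scheme_def
  using placement_ok_cache delivery_correct_precoding by blast

end

theorem theorem1:
  fixes K L F Z S :: nat and A :: "nat \<Rightarrow> nat \<Rightarrow> nat option"
  assumes "0 < K" "0 < L" "0 < F" "0 < Z" "0 < S" "L \<le> K"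
    and "EPDA K L F Z S A"
  shows "\<forall>N::nat. 0 < N \<longrightarrow>
           (\<exists>M::real. \<exists>Zc. M / real N = real Z / real F \<and>
              mac_scheme K L M N F (real S / real F) Zc)"
proof (intro allI impI)
  fix N :: nat assume "0 < N"
  interpret epda K L F Z S A
    using assms(7) by unfold_locales
  have "real N * real Z / real F / real N = real Z / real F"
    using \<open>0 < N\<close> by simp
  then show "\<exists>M::real. \<exists>Zc. M / real N = real Z / real F \<and>
      mac_scheme K L M N F (real S / real F) Zc"
    using mac_scheme_cache by blast
qed

end
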